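(* Let $n\ge1$. For every function $f(t)=\sum_{j=1}^na_je^{\lambda_jt}$ with $a_j,\lambda_j\in\mathbb{C}$ and $\mathrm{Re}(\lambda_j)<1/2$ for all $j$, $$\|f'\| \le \left(\max_{1\le j\le n}|\lambda_j| + \left(\sum_{j=1}^n\left(1-2\mathrm{Re}(\lambda_j)\right)\sum_{k=j+1}^n\left(1-2\mathrm{Re}(\lambda_k)\right)\right)^{1/2}\right)\|f\|,$$ where $\|g\|:=\left(\int_0^\infty|g(t)|^2e^{-t}\,dt\right)^{1/2}$. *)

theory Defs
  imports "HOL-Analysis.Analysis"
begin

definition wnorm :: "(real \<Rightarrow> complex) \<Rightarrow> real" where
  "wnorm g = sqrt (LINT t:{0..}|lborel. (cmod (g t))\<^sup>2 * exp (- t))"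

end

theory Submission
  imports Defs "HOL-Library.Function_Algebras" "HOL-Real_Asymp.Real_Asymp"
begin

text \<open>
  On coefficient vectors the weighted inner product is the
  Gram form <c, d> = sum_{j,k} c_j conj(d_k) / (1 - lambda_j - conj(lambda_k)), differentiation is
  the diagonal map (D c)_j = lambda_j c_j, and integration by parts gives the Lyapunov identity
  <D c, d> + <c, D d> = <c, d> - f_c(0) conj(f_d(0)). After Gram-Schmidt orthogonalisation of the
  exponentials, D is upper triangular with diagonal lambda_k, and by the Lyapunov identity its
  strictly upper part has entries -e_k(0) conj(e_j(0)), where |e_k(0)|^2 = w_k = 1 - 2 Re lambda_k;
  the Hilbert-Schmidt norm of that part is the square root in the bound. Adding one exponential at
  a time, we carry along |f(0)|^2 <= (sum_{j<=m} w_j) ||f||^2 and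
  ||f'|| <= (max |lambda| + (sum_{j<k<=m} w_j w_k)^(1/2)) ||f|| on the span of the first m
  exponentials. The exponentials need not be distinct, so the Gram form is only semidefinite.
\<close>

lemma discriminant_le_of_quadratic_nonneg:
  fixes a b c :: real
  assumes "c \<ge> 0" and "\<And>t. 0 \<le> a + 2 * t * b + t\<^sup>2 * c"
  shows "b\<^sup>2 \<le> a * c"
proof (cases "c = 0")
  case True
  show ?thesis
  proof (cases "b = 0")
    case False
    have "0 \<le> a + 2 * (-(a+1)/(2*b)) * b + (-(a+1)/(2*b))\<^sup>2 * c" by (rule assms(2))
    with True False show ?thesis by (simp add: field_simps)
  qed (use assms(2)[of 0] True in simp)
next
  case False
  with assms(1) have c: "c > 0" by simp
  have "0 \<le> a + 2 * (-b/c) * b + (-b/c)\<^sup>2 * c" by (rule assms(2))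
  then have "0 \<le> a - b\<^sup>2 / c" using c by (simp add: power2_eq_square field_simps)
  then show ?thesis using c by (simp add: field_simps)
qed

lemma power2_add_le_mult_add_add:
  fixes A B a1 a2 b1 b2 :: real
  assumes "A \<ge> 0" "B \<ge> 0" "a1 \<ge> 0" "a2 \<ge> 0" "b1 \<ge> 0" "b2 \<ge> 0"
    and "A\<^sup>2 \<le> a1 * b1" "B\<^sup>2 \<le> a2 * b2"
  shows "(A + B)\<^sup>2 \<le> (a1 + a2) * (b1 + b2)"
proof -
  have "(A * B)\<^sup>2 \<le> (a1 * b1) * (a2 * b2)"
    using assms by (simp add: power_mult_distrib mult_mono)
  then have "(2 * (A * B))\<^sup>2 \<le> 4 * ((a1 * b2) * (a2 * b1))"
    by (simp add: power_mult_distrib mult_ac)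
  also have "\<dots> \<le> (a1 * b2 + a2 * b1)\<^sup>2"
    using zero_le_power2[of "a1 * b2 - a2 * b1"] by (simp add: power2_eq_square algebra_simps)
  finally have "2 * (A * B) \<le> a1 * b2 + a2 * b1"
    by (rule power2_le_imp_le) (use assms in simp)
  then show ?thesis using assms by (simp add: power2_eq_square algebra_simps)
qed

text \<open>The matrix \<open>[[M + s, H], [0, M]]\<close> stretches nonnegative vectors by at most \<open>M + sqrt (s\<^sup>2 + H\<^sup>2)\<close>.\<close>
lemma triangular_operator_bound:
  fixes M s H x y :: real
  assumes "M \<ge> 0" "s \<ge> 0" "H \<ge> 0" "x \<ge> 0" "y \<ge> 0"
  shows "((M + s) * x + H * y)\<^sup>2 + M\<^sup>2 * y\<^sup>2 \<le> (M + sqrt (s\<^sup>2 + H\<^sup>2))\<^sup>2 * (x\<^sup>2 + y\<^sup>2)"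
proof -
  define r where "r = sqrt (x\<^sup>2 + y\<^sup>2)"
  define q where "q = sqrt (s\<^sup>2 + H\<^sup>2)"
  define u where "u = s * x + H * y"
  have r0: "0 \<le> r" and q0: "0 \<le> q" and u0: "0 \<le> u"
    unfolding r_def q_def u_def using assms by simp_all
  have r2: "r\<^sup>2 = x\<^sup>2 + y\<^sup>2" and q2: "q\<^sup>2 = s\<^sup>2 + H\<^sup>2"
    unfolding r_def q_def by simp_all
  have xr: "x \<le> r" unfolding r_def by (rule real_le_rsqrt) simp
  have "u\<^sup>2 \<le> (s\<^sup>2 + H\<^sup>2) * (x\<^sup>2 + y\<^sup>2)"
    unfolding u_def using assms
    by (intro power2_add_le_mult_add_add) (simp_all add: power_mult_distrib)
  then have uqr2: "u\<^sup>2 \<le> (q * r)\<^sup>2" by (simp add: power_mult_distrib q2 r2)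
  then have "u \<le> q * r" by (rule power2_le_imp_le) (use q0 r0 in simp)
  with xr r0 u0 have "x * u \<le> r * (q * r)" by (simp add: mult_mono)
  then have "2 * M * x * u \<le> 2 * M * r * (q * r)"
    using mult_left_mono[of "x * u" "r * (q * r)" "2 * M"] assms(1) by (simp add: mult.assoc)
  then have "((M + s) * x + H * y)\<^sup>2 + M\<^sup>2 * y\<^sup>2 \<le> M\<^sup>2 * r\<^sup>2 + 2 * M * r * (q * r) + (q * r)\<^sup>2"
    using uqr2 unfolding r2 u_def by (simp add: power2_eq_square algebra_simps)
  also have "\<dots> = (M + q)\<^sup>2 * r\<^sup>2" by (simp add: power2_eq_square algebra_simps)
  finally show ?thesis unfolding q_def r2 .
qed

lemma
  fixes f :: "real \<Rightarrow> 'b::{banach, second_countable_topology}"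
  assumes [measurable]: "f \<in> borel_measurable lborel"
  shows set_integrable_Ici_iff_Ioi: "set_integrable lborel {0..} f \<longleftrightarrow> set_integrable lborel {0<..} f"
    and set_integral_Ici_eq_Ioi: "(LINT t:{0..}|lborel. f t) = (LINT t:{0<..}|lborel. f t)"
proof -
  have ae: "AE x in lborel. indicator {0..} x *\<^sub>R f x = indicator {0<..} x *\<^sub>R f x"
    using AE_lborel_singleton[of "0::real"] by eventually_elim (auto split: split_indicator)
  show "set_integrable lborel {0..} f \<longleftrightarrow> set_integrable lborel {0<..} f"
    unfolding set_integrable_def by (rule integrable_cong_AE) (use ae in auto)
  show "(LINT t:{0..}|lborel. f t) = (LINT t:{0<..}|lborel. f t)"
    unfolding set_lebesgue_integral_def by (rule integral_cong_AE) (use ae in auto)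
qed

lemma
  fixes f :: "'i \<Rightarrow> 'a \<Rightarrow> 'b::{banach, second_countable_topology}"
  assumes "\<And>i. i \<in> I \<Longrightarrow> set_integrable M A (f i)"
  shows set_integrable_sum: "set_integrable M A (\<lambda>x. \<Sum>i\<in>I. f i x)"
    and set_integral_sum: "(LINT x:A|M. (\<Sum>i\<in>I. f i x)) = (\<Sum>i\<in>I. LINT x:A|M. f i x)"
proof -
  have e: "(\<lambda>x. indicator A x *\<^sub>R (\<Sum>i\<in>I. f i x)) = (\<lambda>x. \<Sum>i\<in>I. indicator A x *\<^sub>R f i x)"
    by (simp add: scaleR_sum_right)
  show "set_integrable M A (\<lambda>x. \<Sum>i\<in>I. f i x)"
    unfolding set_integrable_def e
    by (rule Bochner_Integration.integrable_sum) (use assms in \<open>auto simp: set_integrable_def\<close>)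
  show "(LINT x:A|M. (\<Sum>i\<in>I. f i x)) = (\<Sum>i\<in>I. LINT x:A|M. f i x)"
    unfolding set_lebesgue_integral_def e
    by (rule Bochner_Integration.integral_sum) (use assms in \<open>auto simp: set_integrable_def\<close>)
qed

lemma has_vector_derivative_exp_mult:
  fixes c :: complex
  shows "((\<lambda>t::real. exp (c * of_real t)) has_vector_derivative c * exp (c * of_real t)) (at t)"
proof -
  have "\<And>t. c * of_real t = t *\<^sub>R c" by (simp add: scaleR_conv_of_real mult.commute)
  then show ?thesis by (simp only: exp_scaleR_has_vector_derivative_left)
qed

lemma
  fixes \<mu> :: complex
  assumes "Re \<mu> < 0"
  shows set_integrable_exp_mult: "set_integrable lborel {0..} (\<lambda>t. exp (\<mu> * of_real t))"
    and set_integral_exp_mult: "(LINT t:{0..}|lborel. exp (\<mu> * of_real t)) = - 1 / \<mu>"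
proof -
  have \<mu>0: "\<mu> \<noteq> 0" using assms by auto
  have [measurable]: "(\<lambda>t::real. exp (\<mu> * of_real t)) \<in> borel_measurable lborel"
    by measurable
  have real_integrable: "set_integrable lborel (einterval (ereal 0) \<infinity>) (\<lambda>t. exp (Re \<mu> * t))"
  proof (rule interval_integral_FTC_nonneg(1)
      [where F = "\<lambda>t. exp (Re \<mu> * t) / Re \<mu>" and A = "1 / Re \<mu>" and B = 0])
    show "\<And>x. DERIV (\<lambda>t. exp (Re \<mu> * t) / Re \<mu>) x :> exp (Re \<mu> * x)"
      using assms by (auto intro!: derivative_eq_intros)
    show "(((\<lambda>t. exp (Re \<mu> * t) / Re \<mu>) \<circ> real_of_ereal) \<longlongrightarrow> 1 / Re \<mu>) (at_right (ereal 0))"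
      unfolding ereal_tendsto_simps using assms by (auto intro!: tendsto_eq_intros)
    show "(((\<lambda>t. exp (Re \<mu> * t) / Re \<mu>) \<circ> real_of_ereal) \<longlongrightarrow> 0) (at_left \<infinity>)"
      unfolding ereal_tendsto_simps using assms by real_asymp
  qed (auto intro!: continuous_intros)
  have integrable: "set_integrable lborel {0<..} (\<lambda>t. exp (\<mu> * of_real t))"
    by (rule set_integrable_bound[OF real_integrable[simplified]]) (auto simp: set_borel_measurable_def norm_exp)
  then show "set_integrable lborel {0..} (\<lambda>t. exp (\<mu> * of_real t))"
    by (simp add: set_integrable_Ici_iff_Ioi)
  have "(LINT t:{0<..}|lborel. exp (\<mu> * of_real t)) = (LBINT t=ereal 0..\<infinity>. exp (\<mu> * of_real t))"
    by (simp add: interval_integral_to_infinity_eq)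
  also have "\<dots> = 0 - 1 / \<mu>"
  proof (rule interval_integral_FTC_integrable[where F = "\<lambda>t. exp (\<mu> * of_real t) / \<mu>"])
    show "\<And>x. ((\<lambda>t. exp (\<mu> * of_real t) / \<mu>) has_vector_derivative exp (\<mu> * of_real x)) (at x)"
      using has_vector_derivative_divide[OF has_vector_derivative_exp_mult[of \<mu>], where a = \<mu>] \<mu>0 by simp
    show "(((\<lambda>t. exp (\<mu> * of_real t) / \<mu>) \<circ> real_of_ereal) \<longlongrightarrow> 1 / \<mu>) (at_right (ereal 0))"
      unfolding ereal_tendsto_simps by (auto intro!: tendsto_eq_intros simp: \<mu>0)
    have "((\<lambda>t. exp (Re \<mu> * t)) \<longlongrightarrow> 0) at_top"
      using assms by real_asymp
    from tendsto_divide_zero[OF this, of "cmod \<mu>"]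
    show "(((\<lambda>t. exp (\<mu> * of_real t) / \<mu>) \<circ> real_of_ereal) \<longlongrightarrow> 0) (at_left \<infinity>)"
      unfolding ereal_tendsto_simps
      by (subst tendsto_norm_zero_iff[symmetric]) (simp add: norm_divide norm_exp)
  qed (use integrable in \<open>auto intro!: continuous_intros\<close>)
  finally show "(LINT t:{0..}|lborel. exp (\<mu> * of_real t)) = - 1 / \<mu>"
    by (simp add: set_integral_Ici_eq_Ioi)
qed

definition scale_coeffs :: "complex \<Rightarrow> (nat \<Rightarrow> complex) \<Rightarrow> nat \<Rightarrow> complex" (infixr \<open>*\<^sub>c\<close> 75)
  where "a *\<^sub>c x = (\<lambda>j. a * x j)"

lemma scale_coeffs_apply [simp]: "(a *\<^sub>c x) j = a * x j"
  by (simp add: scale_coeffs_def)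

locale exp_sum =
  fixes n :: nat and lam :: "nat \<Rightarrow> complex"
  assumes Re_lam_less: "\<And>j. j \<in> {1..n} \<Longrightarrow> Re (lam j) < 1/2"
begin

definition expsum :: "(nat \<Rightarrow> complex) \<Rightarrow> real \<Rightarrow> complex"
  where "expsum c t = (\<Sum>j\<in>{1..n}. c j * exp (lam j * of_real t))"

definition gram :: "nat \<Rightarrow> nat \<Rightarrow> complex"
  where "gram j k = 1 / (1 - lam j - cnj (lam k))"

definition ip :: "(nat \<Rightarrow> complex) \<Rightarrow> (nat \<Rightarrow> complex) \<Rightarrow> complex"
  where "ip c d = (\<Sum>j\<in>{1..n}. \<Sum>k\<in>{1..n}. c j * cnj (d k) * gram j k)"

definition sqnorm :: "(nat \<Rightarrow> complex) \<Rightarrow> real"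
  where "sqnorm c = Re (ip c c)"

definition deriv_coeffs :: "(nat \<Rightarrow> complex) \<Rightarrow> nat \<Rightarrow> complex"
  where "deriv_coeffs c = (\<lambda>j. lam j * c j)"

definition eval0 :: "(nat \<Rightarrow> complex) \<Rightarrow> complex"
  where "eval0 c = (\<Sum>j\<in>{1..n}. c j)"

text \<open>The span of the first \<open>m\<close> exponentials. Only the entries in \<open>{1..n}\<close> of a coefficient
  vector matter, so \<open>coeffs_upto n\<close> is everything.\<close>
definition coeffs_upto :: "nat \<Rightarrow> (nat \<Rightarrow> complex) set"
  where "coeffs_upto m = {c. \<forall>j\<in>{m<..n}. c j = 0}"

lemma cnj_gram: "cnj (gram j k) = gram k j"
  unfolding gram_def by (simp add: algebra_simps)

lemma gram_eq: "gram j k = - 1 / (lam j + cnj (lam k) - 1)"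
  unfolding gram_def by (simp add: divide_simps algebra_simps)

lemma ip_add_left: "ip (x + y) d = ip x d + ip y d"
  unfolding ip_def by (simp add: distrib_right sum.distrib)

lemma ip_add_right: "ip d (x + y) = ip d x + ip d y"
  unfolding ip_def by (simp add: distrib_right distrib_left sum.distrib)

lemma ip_diff_left: "ip (x - y) d = ip x d - ip y d"
  unfolding ip_def by (simp add: left_diff_distrib sum_subtractf)

lemma ip_scale_left: "ip (a *\<^sub>c x) d = a * ip x d"
  unfolding ip_def by (simp add: sum_distrib_left mult.assoc)

lemma ip_scale_right: "ip d (a *\<^sub>c x) = cnj a * ip d x"
  unfolding ip_def by (simp add: sum_distrib_left algebra_simps)

lemmas ip_simps = ip_add_left ip_add_right ip_diff_left ip_scale_left ip_scale_right

lemma cnj_ip: "cnj (ip c d) = ip d c"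
  unfolding ip_def by (simp add: cnj_sum cnj_gram algebra_simps) (rule sum.swap)

lemma ip_self: "ip c c = of_real (sqnorm c)"
  using cnj_ip[of c c] unfolding sqnorm_def by (metis Reals_cnj_iff complex_is_Real_iff of_real_Re)

lemma eval0_add [simp]: "eval0 (x + y) = eval0 x + eval0 y"
  and eval0_scale [simp]: "eval0 (a *\<^sub>c x) = a * eval0 x"
  unfolding eval0_def by (simp_all add: sum.distrib sum_distrib_left)

text \<open>Coefficient form of the integration by parts identity
  \<open>\<integral>\<^sub>0\<^sup>\<infinity> (f' g\<^sup>* + f g'\<^sup>*) e\<^sup>-\<^sup>t = \<integral>\<^sub>0\<^sup>\<infinity> f g\<^sup>* e\<^sup>-\<^sup>t - f(0) g(0)\<^sup>*\<close>.\<close>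
lemma ip_deriv_coeffs: "ip (deriv_coeffs c) d + ip c (deriv_coeffs d) = ip c d - eval0 c * cnj (eval0 d)"
proof -
  have key: "(lam j + cnj (lam k)) * gram j k = gram j k - 1" if "j \<in> {1..n}" "k \<in> {1..n}" for j k
  proof -
    have "Re (1 - lam j - cnj (lam k)) > 0" using Re_lam_less[OF that(1)] Re_lam_less[OF that(2)] by simp
    then have "1 - lam j - cnj (lam k) \<noteq> 0" by force
    then show ?thesis unfolding gram_def by (simp add: field_simps)
  qed
  have "ip (deriv_coeffs c) d + ip c (deriv_coeffs d)
      = (\<Sum>j\<in>{1..n}. \<Sum>k\<in>{1..n}. c j * cnj (d k) * ((lam j + cnj (lam k)) * gram j k))"
    unfolding ip_def deriv_coeffs_def by (simp add: sum.distrib[symmetric] algebra_simps)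
  also have "\<dots> = (\<Sum>j\<in>{1..n}. \<Sum>k\<in>{1..n}. c j * cnj (d k) * gram j k - c j * cnj (d k))"
    by (intro sum.cong refl) (simp add: key right_diff_distrib)
  also have "\<dots> = ip c d - eval0 c * cnj (eval0 d)"
    unfolding ip_def eval0_def by (simp add: sum_subtractf sum_product cnj_sum)
  finally show ?thesis .
qed

lemma expsum_sq_weighted:
  "complex_of_real ((cmod (expsum c t))\<^sup>2 * exp (- t))
    = (\<Sum>j\<in>{1..n}. \<Sum>k\<in>{1..n}. c j * cnj (c k) * exp ((lam j + cnj (lam k) - 1) * of_real t))"
proof -
  have "complex_of_real ((cmod (expsum c t))\<^sup>2 * exp (- t)) = expsum c t * cnj (expsum c t) * exp (- of_real t)"
    by (simp only: of_real_mult complex_norm_square flip: exp_of_real) simp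
  also have "\<dots> = (\<Sum>j\<in>{1..n}. \<Sum>k\<in>{1..n}.
      c j * exp (lam j * of_real t) * (cnj (c k) * exp (cnj (lam k) * of_real t)) * exp (- of_real t))"
    unfolding expsum_def cnj_sum sum_product sum_distrib_right
    by (simp add: exp_cnj sum_distrib_left sum_distrib_right)
  also have "\<dots> = (\<Sum>j\<in>{1..n}. \<Sum>k\<in>{1..n}. c j * cnj (c k) * exp ((lam j + cnj (lam k) - 1) * of_real t))"
  proof (intro sum.cong refl)
    fix j k
    have "exp ((lam j + cnj (lam k) - 1) * of_real t)
        = exp (lam j * of_real t) * exp (cnj (lam k) * of_real t) * exp (- of_real t)"
      by (simp add: algebra_simps flip: exp_add)
    then show "c j * exp (lam j * of_real t) * (cnj (c k) * exp (cnj (lam k) * of_real t)) * exp (- of_real t)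
        = c j * cnj (c k) * exp ((lam j + cnj (lam k) - 1) * of_real t)"
      by simp
  qed
  finally show ?thesis .
qed

lemma set_integral_expsum_sq: "(LINT t:{0..}|lborel. (cmod (expsum c t))\<^sup>2 * exp (- t)) = sqnorm c"
proof -
  define g where "g j k t = c j * cnj (c k) * exp ((lam j + cnj (lam k) - 1) * of_real t)" for j k t
  have Re_neg: "Re (lam j + cnj (lam k) - 1) < 0" if "j \<in> {1..n}" "k \<in> {1..n}" for j k
    using Re_lam_less[OF that(1)] Re_lam_less[OF that(2)] by simp
  have g_integrable: "set_integrable lborel {0..} (g j k)" if "j \<in> {1..n}" "k \<in> {1..n}" for j k
    unfolding g_def using set_integrable_exp_mult[OF Re_neg[OF that]] by simp
  have g_integral: "(LINT t:{0..}|lborel. g j k t) = c j * cnj (c k) * gram j k"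
    if "j \<in> {1..n}" "k \<in> {1..n}" for j k
    unfolding g_def by (simp add: set_integral_exp_mult[OF Re_neg[OF that]] gram_eq)
  have "complex_of_real (LINT t:{0..}|lborel. (cmod (expsum c t))\<^sup>2 * exp (- t))
      = (LINT t:{0..}|lborel. complex_of_real ((cmod (expsum c t))\<^sup>2 * exp (- t)))"
    by (rule set_integral_complex_of_real[symmetric])
  also have "\<dots> = (LINT t:{0..}|lborel. (\<Sum>j\<in>{1..n}. \<Sum>k\<in>{1..n}. g j k t))"
    by (simp only: expsum_sq_weighted g_def)
  also have "\<dots> = (\<Sum>j\<in>{1..n}. \<Sum>k\<in>{1..n}. LINT t:{0..}|lborel. g j k t)"
    by (subst set_integral_sum) (auto intro!: sum.cong set_integral_sum set_integrable_sum g_integrable)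
  also have "\<dots> = ip c c"
    unfolding ip_def by (simp add: g_integral)
  finally show ?thesis by (simp add: ip_self)
qed

lemma sqnorm_nonneg: "sqnorm c \<ge> 0"
  unfolding set_integral_expsum_sq[symmetric] set_lebesgue_integral_def
  by (intro integral_nonneg_AE AE_I2) (auto simp: indicator_def)

lemma sqnorm_add: "sqnorm (x + y) = sqnorm x + 2 * Re (ip x y) + sqnorm y"
  using arg_cong[OF cnj_ip[of x y], of Re] unfolding sqnorm_def by (simp add: ip_simps)

lemma sqnorm_scale: "sqnorm (a *\<^sub>c x) = (cmod a)\<^sup>2 * sqnorm x"
proof -
  have "ip (a *\<^sub>c x) (a *\<^sub>c x) = (a * cnj a) * ip x x" by (simp add: ip_simps)
  also have "\<dots> = of_real ((cmod a)\<^sup>2 * sqnorm x)" by (simp add: ip_self flip: complex_norm_square)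
  finally show ?thesis unfolding sqnorm_def by simp
qed

lemma Re_ip_square_le: "(Re (ip x y))\<^sup>2 \<le> sqnorm x * sqnorm y"
proof (rule discriminant_le_of_quadratic_nonneg)
  fix t :: real
  have "0 \<le> sqnorm (x + of_real t *\<^sub>c y)" by (rule sqnorm_nonneg)
  then show "0 \<le> sqnorm x + 2 * t * Re (ip x y) + t\<^sup>2 * sqnorm y"
    by (simp add: sqnorm_add sqnorm_scale ip_simps)
qed (rule sqnorm_nonneg)

lemma ip_eq_0_if_sqnorm_eq_0:
  assumes "sqnorm y = 0"
  shows "ip x y = 0"
proof -
  have "Re (ip x y) = 0" using Re_ip_square_le[of x y] assms by simp
  moreover have "Re (ip x (\<i> *\<^sub>c y)) = 0"
    using Re_ip_square_le[of x "\<i> *\<^sub>c y"] assms by (simp add: sqnorm_scale)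
  ultimately show ?thesis by (simp add: ip_simps complex_eq_iff)
qed

lemma sqrt_sqnorm_add_le: "sqrt (sqnorm (x + y)) \<le> sqrt (sqnorm x) + sqrt (sqnorm y)"
proof -
  have "(Re (ip x y))\<^sup>2 \<le> (sqrt (sqnorm x) * sqrt (sqnorm y))\<^sup>2"
    using Re_ip_square_le[of x y] sqnorm_nonneg[of x] sqnorm_nonneg[of y] by (simp add: power_mult_distrib)
  then have "Re (ip x y) \<le> sqrt (sqnorm x) * sqrt (sqnorm y)"
    by (rule power2_le_imp_le) (simp add: sqnorm_nonneg)
  then have "sqnorm (x + y) \<le> (sqrt (sqnorm x) + sqrt (sqnorm y))\<^sup>2"
    using sqnorm_nonneg[of x] sqnorm_nonneg[of y] by (simp add: sqnorm_add power2_sum)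
  then have "sqrt (sqnorm (x + y)) \<le> sqrt ((sqrt (sqnorm x) + sqrt (sqnorm y))\<^sup>2)"
    by (rule real_sqrt_le_mono)
  then show ?thesis using sqnorm_nonneg[of x] sqnorm_nonneg[of y] by simp
qed

lemma coeffs_upto_n [simp]: "c \<in> coeffs_upto n"
  by (simp add: coeffs_upto_def)

lemma coeffs_upto_mono: "m \<le> m' \<Longrightarrow> coeffs_upto m \<subseteq> coeffs_upto m'"
  unfolding coeffs_upto_def by auto

lemma coeffs_upto_add [intro]: "x \<in> coeffs_upto m \<Longrightarrow> y \<in> coeffs_upto m \<Longrightarrow> x + y \<in> coeffs_upto m"
  and coeffs_upto_scale [intro]: "x \<in> coeffs_upto m \<Longrightarrow> a *\<^sub>c x \<in> coeffs_upto m"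
  and deriv_coeffs_in_coeffs_upto [intro]: "x \<in> coeffs_upto m \<Longrightarrow> deriv_coeffs x \<in> coeffs_upto m"
  unfolding coeffs_upto_def deriv_coeffs_def by auto

lemma ip_coeffs_upto_0: "d \<in> coeffs_upto 0 \<Longrightarrow> ip c d = 0"
  unfolding coeffs_upto_def ip_def by simp

lemma eval0_coeffs_upto_0: "c \<in> coeffs_upto 0 \<Longrightarrow> eval0 c = 0"
  unfolding coeffs_upto_def eval0_def by simp

lemma sqnorm_coeffs_upto_0: "c \<in> coeffs_upto 0 \<Longrightarrow> sqnorm c = 0"
  by (simp add: sqnorm_def ip_coeffs_upto_0)

lemma coeffs_upto_Suc_decompose:
  assumes "v \<in> coeffs_upto (Suc m)" "z \<in> coeffs_upto (Suc m)" "z (Suc m) = 1"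
  shows "v - v (Suc m) *\<^sub>c z \<in> coeffs_upto m"
  unfolding coeffs_upto_def
proof (intro CollectI ballI)
  fix j assume "j \<in> {m<..n}"
  then consider "j = Suc m" | "j \<in> {Suc m<..n}" by fastforce
  then show "(v - v (Suc m) *\<^sub>c z) j = 0"
    by cases (use assms in \<open>simp_all add: coeffs_upto_def\<close>)
qed

lemma orthogonal_last_of_projection:
  assumes "m < n" and proj: "\<And>x. \<exists>y\<in>coeffs_upto m. \<forall>v\<in>coeffs_upto m. ip (x - y) v = 0"
  shows "\<exists>z\<in>coeffs_upto (Suc m). z (Suc m) = 1 \<and> (\<forall>v\<in>coeffs_upto m. ip z v = 0)"
proof -
  define e :: "nat \<Rightarrow> complex" where "e j = (if j = Suc m then 1 else 0)" for j
  obtain y where "y \<in> coeffs_upto m" and "\<forall>v\<in>coeffs_upto m. ip (e - y) v = 0"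
    using proj by blast
  moreover from \<open>y \<in> coeffs_upto m\<close> \<open>m < n\<close> have "e - y \<in> coeffs_upto (Suc m)" "(e - y) (Suc m) = 1"
    unfolding coeffs_upto_def e_def by auto
  ultimately show ?thesis by blast
qed

lemma exists_orthogonal_projection:
  "m \<le> n \<Longrightarrow> \<exists>y\<in>coeffs_upto m. \<forall>v\<in>coeffs_upto m. ip (x - y) v = 0"
proof (induction m arbitrary: x)
  case 0
  show ?case by (intro bexI[of _ 0]) (auto simp: coeffs_upto_def ip_coeffs_upto_0)
next
  case (Suc m)
  have proj: "\<exists>y\<in>coeffs_upto m. \<forall>v\<in>coeffs_upto m. ip (x' - y) v = 0" for x'
    using Suc.prems by (intro Suc.IH) simp
  obtain z where z_in: "z \<in> coeffs_upto (Suc m)" and z_last: "z (Suc m) = 1"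
    and z_orth: "\<forall>v\<in>coeffs_upto m. ip z v = 0"
    using orthogonal_last_of_projection[OF _ proj] Suc.prems by auto
  obtain y where y_in: "y \<in> coeffs_upto m" and y_proj: "\<forall>v\<in>coeffs_upto m. ip (x - y) v = 0"
    using proj by blast
  define \<beta> where "\<beta> = ip (x - y) z / ip z z"
  have \<beta>: "ip (x - y) z = \<beta> * ip z z"
  proof (cases "ip z z = 0")
    case True
    then show ?thesis using ip_eq_0_if_sqnorm_eq_0 by (simp add: sqnorm_def)
  qed (simp add: \<beta>_def)
  show ?case
  proof (intro bexI ballI)
    show "y + \<beta> *\<^sub>c z \<in> coeffs_upto (Suc m)"
      using y_in z_in coeffs_upto_mono[of m "Suc m"] by auto
    fix v assume v: "v \<in> coeffs_upto (Suc m)"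
    define v' where "v' = v - v (Suc m) *\<^sub>c z"
    have "v' \<in> coeffs_upto m" unfolding v'_def by (rule coeffs_upto_Suc_decompose[OF v z_in z_last])
    then have v'_orth: "ip (x - y) v' = 0" "ip z v' = 0" using y_proj z_orth by auto
    have ip_v: "ip w v = ip w v' + cnj (v (Suc m)) * ip w z" for w
    proof -
      have "v = v' + v (Suc m) *\<^sub>c z" by (simp add: v'_def fun_eq_iff)
      then have "ip w v = ip w (v' + v (Suc m) *\<^sub>c z)" by (rule arg_cong)
      then show ?thesis by (simp add: ip_simps)
    qed
    have "ip (x - (y + \<beta> *\<^sub>c z)) v = ip (x - y) v - \<beta> * ip z v"
      by (simp add: ip_simps)
    also have "\<dots> = 0"
      unfolding ip_v[of "x - y"] ip_v[of z] using v'_orth \<beta> by simp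
    finally show "ip (x - (y + \<beta> *\<^sub>c z)) v = 0" .
  qed
qed

definition weight :: "nat \<Rightarrow> real"
  where "weight j = 1 - 2 * Re (lam j)"

definition weight_sum :: "nat \<Rightarrow> real"
  where "weight_sum m = (\<Sum>j=1..m. weight j)"

definition cross_sum :: "nat \<Rightarrow> real"
  where "cross_sum m = (\<Sum>j=1..m. weight j * (\<Sum>k=j+1..m. weight k))"

lemma weight_pos: "j \<in> {1..n} \<Longrightarrow> weight j > 0"
  using Re_lam_less[of j] by (simp add: weight_def)

lemma weight_nonneg: "j \<in> {1..n} \<Longrightarrow> weight j \<ge> 0"
  using weight_pos[of j] by simp

lemma weight_sum_nonneg: "m \<le> n \<Longrightarrow> weight_sum m \<ge> 0"
  unfolding weight_sum_def by (intro sum_nonneg weight_nonneg) simp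

lemma cross_sum_nonneg: "m \<le> n \<Longrightarrow> cross_sum m \<ge> 0"
  unfolding cross_sum_def
  by (intro sum_nonneg mult_nonneg_nonneg weight_nonneg) auto

lemma weight_sum_Suc: "weight_sum (Suc m) = weight_sum m + weight (Suc m)"
  by (simp add: weight_sum_def)

lemma cross_sum_Suc: "cross_sum (Suc m) = cross_sum m + weight (Suc m) * weight_sum m"
proof -
  have "cross_sum (Suc m) = (\<Sum>j=1..m. weight j * (\<Sum>k=j+1..Suc m. weight k))"
    by (simp add: cross_sum_def)
  also have "\<dots> = (\<Sum>j=1..m. weight j * (\<Sum>k=j+1..m. weight k) + weight j * weight (Suc m))"
    by (intro sum.cong refl) (simp add: sum.cl_ivl_Suc algebra_simps)
  also have "\<dots> = cross_sum m + weight (Suc m) * weight_sum m"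
    by (simp add: cross_sum_def weight_sum_def sum.distrib sum_distrib_left mult.commute)
  finally show ?thesis .
qed

end

text \<open>\<open>z\<close> is the Gram--Schmidt vector of the \<open>(m+1)\<close>-st exponential.\<close>
locale exp_sum_step = exp_sum +
  fixes m :: nat and z :: "nat \<Rightarrow> complex"
  assumes m_less: "m < n" and z_in: "z \<in> coeffs_upto (Suc m)" and z_last: "z (Suc m) = 1"
    and z_orth: "\<And>v. v \<in> coeffs_upto m \<Longrightarrow> ip z v = 0"
begin

text \<open>The component of \<open>D z\<close> in the span of the first \<open>m\<close> exponentials, i.e. the new column
  of the strictly upper triangular part of \<open>D\<close>.\<close>
definition offdiag :: "nat \<Rightarrow> complex"
  where "offdiag = deriv_coeffs z - lam (Suc m) *\<^sub>c z"

lemma ip_z_right: "v \<in> coeffs_upto m \<Longrightarrow> ip v z = 0"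
  using cnj_ip[of z v] z_orth[of v] by simp

lemma sqnorm_add_scale_z: "u \<in> coeffs_upto m \<Longrightarrow> sqnorm (u + \<beta> *\<^sub>c z) = sqnorm u + (cmod \<beta>)\<^sup>2 * sqnorm z"
  by (simp add: sqnorm_add sqnorm_scale ip_scale_right ip_z_right)

lemma split_off_z: "c \<in> coeffs_upto (Suc m) \<Longrightarrow> c - c (Suc m) *\<^sub>c z \<in> coeffs_upto m"
  by (rule coeffs_upto_Suc_decompose[OF _ z_in z_last])

lemma offdiag_in: "offdiag \<in> coeffs_upto m"
proof -
  have "offdiag = deriv_coeffs z - deriv_coeffs z (Suc m) *\<^sub>c z"
    using z_last by (simp add: offdiag_def deriv_coeffs_def)
  then show ?thesis using split_off_z[OF deriv_coeffs_in_coeffs_upto[OF z_in]] by simp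
qed

lemma sqnorm_split_off_z:
  assumes "c \<in> coeffs_upto (Suc m)"
  shows "sqnorm c = sqnorm (c - c (Suc m) *\<^sub>c z) + (cmod (c (Suc m)))\<^sup>2 * sqnorm z"
proof -
  have "c = (c - c (Suc m) *\<^sub>c z) + c (Suc m) *\<^sub>c z" by (simp add: fun_eq_iff)
  then show ?thesis using split_off_z[OF assms] by (metis sqnorm_add_scale_z)
qed

lemma sqnorm_deriv_coeffs_split_off_z:
  assumes "c \<in> coeffs_upto (Suc m)"
  shows "sqnorm (deriv_coeffs c) = sqnorm (deriv_coeffs (c - c (Suc m) *\<^sub>c z) + c (Suc m) *\<^sub>c offdiag)
    + (cmod (c (Suc m) * lam (Suc m)))\<^sup>2 * sqnorm z"
proof -
  have "deriv_coeffs c = (deriv_coeffs (c - c (Suc m) *\<^sub>c z) + c (Suc m) *\<^sub>c offdiag)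
      + (c (Suc m) * lam (Suc m)) *\<^sub>c z"
    by (simp add: offdiag_def deriv_coeffs_def fun_eq_iff algebra_simps)
  moreover have "deriv_coeffs (c - c (Suc m) *\<^sub>c z) + c (Suc m) *\<^sub>c offdiag \<in> coeffs_upto m"
    using split_off_z[OF assms] offdiag_in by blast
  ultimately show ?thesis by (metis sqnorm_add_scale_z)
qed

lemma ip_offdiag: "v \<in> coeffs_upto m \<Longrightarrow> ip offdiag v = - eval0 z * cnj (eval0 v)"
  using ip_deriv_coeffs[of z v] z_orth[of v] z_orth[OF deriv_coeffs_in_coeffs_upto, of v]
  by (simp add: offdiag_def ip_simps eq_neg_iff_add_eq_0)

lemma eval0_z_sq: "(cmod (eval0 z))\<^sup>2 = weight (Suc m) * sqnorm z"
proof -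
  have "ip (deriv_coeffs z) z = lam (Suc m) * ip z z"
    using ip_z_right[OF offdiag_in] by (simp add: offdiag_def ip_simps)
  moreover have "ip z (deriv_coeffs z) = cnj (ip (deriv_coeffs z) z)" by (simp add: cnj_ip)
  ultimately have "Re (ip (deriv_coeffs z) z + ip z (deriv_coeffs z)) = 2 * Re (lam (Suc m)) * sqnorm z"
    by (simp add: ip_self)
  moreover have "Re (ip z z - eval0 z * cnj (eval0 z)) = sqnorm z - (cmod (eval0 z))\<^sup>2"
    by (simp add: sqnorm_def flip: complex_norm_square)
  ultimately show ?thesis
    using arg_cong[OF ip_deriv_coeffs[of z z], of Re] by (simp add: weight_def algebra_simps)
qed

lemma eval0_sq_le_Suc:
  assumes IH: "\<And>c. c \<in> coeffs_upto m \<Longrightarrow> (cmod (eval0 c))\<^sup>2 \<le> weight_sum m * sqnorm c"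
    and c: "c \<in> coeffs_upto (Suc m)"
  shows "(cmod (eval0 c))\<^sup>2 \<le> weight_sum (Suc m) * sqnorm c"
proof -
  define \<alpha> where "\<alpha> = c (Suc m)"
  define c' where "c' = c - \<alpha> *\<^sub>c z"
  have c': "c' \<in> coeffs_upto m" unfolding c'_def \<alpha>_def using c by (rule split_off_z)
  have c_eq: "c = c' + \<alpha> *\<^sub>c z" by (simp add: c'_def fun_eq_iff)
  have "cmod (eval0 c) \<le> cmod (eval0 c') + cmod \<alpha> * cmod (eval0 z)"
    unfolding c_eq by (simp add: norm_triangle_le norm_mult)
  then have "(cmod (eval0 c))\<^sup>2 \<le> (cmod (eval0 c') + cmod \<alpha> * cmod (eval0 z))\<^sup>2"
    by (rule power_mono) simp
  also have "\<dots> \<le> (weight_sum m + weight (Suc m)) * (sqnorm c' + (cmod \<alpha>)\<^sup>2 * sqnorm z)"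
    using IH[OF c'] eval0_z_sq weight_sum_nonneg[of m] weight_pos[of "Suc m"] m_less
    by (intro power2_add_le_mult_add_add) (simp_all add: sqnorm_nonneg power_mult_distrib)
  also have "\<dots> = weight_sum (Suc m) * sqnorm c"
    using sqnorm_split_off_z[OF c] by (simp add: weight_sum_Suc c'_def \<alpha>_def)
  finally show ?thesis .
qed

end

context exp_sum
begin

lemma exists_exp_sum_step: "m < n \<Longrightarrow> \<exists>z. exp_sum_step n lam m z"
  using orthogonal_last_of_projection[of m] exists_orthogonal_projection[of m]
  by (auto simp: exp_sum_step_def exp_sum_step_axioms_def exp_sum_axioms)

lemma eval0_sq_le: "m \<le> n \<Longrightarrow> c \<in> coeffs_upto m \<Longrightarrow> (cmod (eval0 c))\<^sup>2 \<le> weight_sum m * sqnorm c"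
proof (induction m arbitrary: c)
  case 0
  then show ?case by (simp add: eval0_coeffs_upto_0 sqnorm_coeffs_upto_0)
next
  case (Suc m)
  obtain z where "exp_sum_step n lam m z" using exists_exp_sum_step[of m] Suc.prems(1) by auto
  then interpret exp_sum_step n lam m z .
  show ?case using Suc by (intro eval0_sq_le_Suc) auto
qed

end

context exp_sum_step
begin

lemma sqnorm_offdiag_le: "sqnorm offdiag \<le> weight (Suc m) * weight_sum m * sqnorm z"
proof -
  have "sqnorm offdiag = Re (- eval0 z * cnj (eval0 offdiag))"
    using ip_offdiag[OF offdiag_in] by (simp add: sqnorm_def)
  also have "\<dots> \<le> cmod (eval0 z) * cmod (eval0 offdiag)"
    using complex_Re_le_cmod[of "- eval0 z * cnj (eval0 offdiag)"] by (simp add: norm_mult)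
  finally have "(sqnorm offdiag)\<^sup>2 \<le> (cmod (eval0 z))\<^sup>2 * (cmod (eval0 offdiag))\<^sup>2"
    using sqnorm_nonneg[of offdiag] by (simp add: power_mono flip: power_mult_distrib)
  also have "\<dots> \<le> (weight (Suc m) * sqnorm z) * (weight_sum m * sqnorm offdiag)"
    using eval0_sq_le[OF _ offdiag_in] m_less weight_pos[of "Suc m"] sqnorm_nonneg[of z]
    by (simp add: eval0_z_sq mult_left_mono)
  finally have "sqnorm offdiag * sqnorm offdiag
      \<le> (weight (Suc m) * weight_sum m * sqnorm z) * sqnorm offdiag"
    by (simp add: power2_eq_square mult_ac)
  then show ?thesis
    using sqnorm_nonneg[of offdiag] weight_pos[of "Suc m"] weight_sum_nonneg[of m] sqnorm_nonneg[of z] m_less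
    by (cases "sqnorm offdiag = 0") auto
qed

lemma sqrt_sqnorm_deriv_add_offdiag_le:
  assumes IH: "\<And>c. c \<in> coeffs_upto m \<Longrightarrow> sqnorm (deriv_coeffs c) \<le> (M + sqrt (cross_sum m))\<^sup>2 * sqnorm c"
    and "0 \<le> M" and c: "c \<in> coeffs_upto m"
  shows "sqrt (sqnorm (deriv_coeffs c + \<alpha> *\<^sub>c offdiag))
    \<le> (M + sqrt (cross_sum m)) * sqrt (sqnorm c)
      + sqrt (weight (Suc m) * weight_sum m) * (cmod \<alpha> * sqrt (sqnorm z))"
proof -
  have "sqrt (sqnorm (deriv_coeffs c)) \<le> sqrt ((M + sqrt (cross_sum m))\<^sup>2 * sqnorm c)"
    using IH[OF c] by (rule real_sqrt_le_mono)
  also have "\<dots> = (M + sqrt (cross_sum m)) * sqrt (sqnorm c)"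
    using \<open>0 \<le> M\<close> cross_sum_nonneg[of m] m_less by (simp add: real_sqrt_mult)
  finally have "sqrt (sqnorm (deriv_coeffs c)) \<le> (M + sqrt (cross_sum m)) * sqrt (sqnorm c)" .
  moreover have "sqrt (sqnorm (\<alpha> *\<^sub>c offdiag))
      \<le> sqrt ((cmod \<alpha>)\<^sup>2 * (weight (Suc m) * weight_sum m * sqnorm z))"
    using sqnorm_offdiag_le by (simp add: sqnorm_scale mult_left_mono)
  moreover have "\<dots> = sqrt (weight (Suc m) * weight_sum m) * (cmod \<alpha> * sqrt (sqnorm z))"
    by (simp add: real_sqrt_mult mult_ac)
  ultimately show ?thesis
    using sqrt_sqnorm_add_le[of "deriv_coeffs c" "\<alpha> *\<^sub>c offdiag"] by linarith
qed

lemma sqnorm_deriv_coeffs_le_Suc: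
  assumes M: "0 \<le> M" "\<And>j. j \<in> {1..n} \<Longrightarrow> cmod (lam j) \<le> M"
    and IH: "\<And>c. c \<in> coeffs_upto m \<Longrightarrow> sqnorm (deriv_coeffs c) \<le> (M + sqrt (cross_sum m))\<^sup>2 * sqnorm c"
    and c: "c \<in> coeffs_upto (Suc m)"
  shows "sqnorm (deriv_coeffs c) \<le> (M + sqrt (cross_sum (Suc m)))\<^sup>2 * sqnorm c"
proof -
  define \<alpha> where "\<alpha> = c (Suc m)"
  define c' where "c' = c - \<alpha> *\<^sub>c z"
  define u where "u = deriv_coeffs c' + \<alpha> *\<^sub>c offdiag"
  have c': "c' \<in> coeffs_upto m" unfolding c'_def \<alpha>_def using c by (rule split_off_z)
  define s where "s = sqrt (cross_sum m)"
  define H where "H = sqrt (weight (Suc m) * weight_sum m)"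
  define x where "x = sqrt (sqnorm c')"
  define y where "y = cmod \<alpha> * sqrt (sqnorm z)"
  have nonneg: "0 \<le> s" "0 \<le> H" "0 \<le> x" "0 \<le> y"
    unfolding s_def H_def x_def y_def
    using m_less cross_sum_nonneg[of m] weight_sum_nonneg[of m] weight_pos[of "Suc m"] sqnorm_nonneg
    by simp_all
  have "sqrt (sqnorm u) \<le> (M + s) * x + H * y"
    unfolding u_def s_def H_def x_def y_def using IH M(1) c' by (rule sqrt_sqnorm_deriv_add_offdiag_le)
  then have "sqnorm u \<le> ((M + s) * x + H * y)\<^sup>2"
    using sqnorm_nonneg[of u] by (metis real_sqrt_le_iff real_sqrt_unique sqrt_le_D)
  moreover have "(cmod (\<alpha> * lam (Suc m)))\<^sup>2 * sqnorm z \<le> M\<^sup>2 * y\<^sup>2"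
  proof -
    have "(cmod (lam (Suc m)))\<^sup>2 \<le> M\<^sup>2" using M(2)[of "Suc m"] m_less by (simp add: power_mono)
    then have "(cmod (lam (Suc m)))\<^sup>2 * y\<^sup>2 \<le> M\<^sup>2 * y\<^sup>2" by (rule mult_right_mono) simp
    then show ?thesis
      using sqnorm_nonneg[of z] unfolding y_def by (simp add: norm_mult power_mult_distrib mult_ac)
  qed
  ultimately have "sqnorm (deriv_coeffs c) \<le> ((M + s) * x + H * y)\<^sup>2 + M\<^sup>2 * y\<^sup>2"
    using sqnorm_deriv_coeffs_split_off_z[OF c] unfolding u_def c'_def \<alpha>_def by linarith
  also have "\<dots> \<le> (M + sqrt (s\<^sup>2 + H\<^sup>2))\<^sup>2 * (x\<^sup>2 + y\<^sup>2)"
    using M(1) nonneg by (intro triangular_operator_bound)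
  also have "s\<^sup>2 + H\<^sup>2 = cross_sum (Suc m)"
    unfolding s_def H_def
    using m_less cross_sum_nonneg[of m] weight_sum_nonneg[of m] weight_pos[of "Suc m"]
    by (simp add: cross_sum_Suc)
  also have "x\<^sup>2 + y\<^sup>2 = sqnorm c"
    unfolding x_def y_def using sqnorm_nonneg[of c'] sqnorm_nonneg[of z]
    by (simp add: sqnorm_split_off_z[OF c] c'_def \<alpha>_def power_mult_distrib)
  finally show ?thesis .
qed

end

context exp_sum
begin

lemma sqnorm_deriv_coeffs_le:
  assumes "0 \<le> M" "\<And>j. j \<in> {1..n} \<Longrightarrow> cmod (lam j) \<le> M"
  shows "m \<le> n \<Longrightarrow> c \<in> coeffs_upto m \<Longrightarrow> sqnorm (deriv_coeffs c) \<le> (M + sqrt (cross_sum m))\<^sup>2 * sqnorm c"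
proof (induction m arbitrary: c)
  case 0
  then show ?case by (simp add: sqnorm_coeffs_upto_0 deriv_coeffs_in_coeffs_upto)
next
  case (Suc m)
  obtain z where "exp_sum_step n lam m z" using exists_exp_sum_step[of m] Suc.prems(1) by auto
  then interpret exp_sum_step n lam m z .
  show ?case using Suc assms by (intro sqnorm_deriv_coeffs_le_Suc) auto
qed

lemma vector_derivative_expsum:
  "vector_derivative (expsum c) (at t) = expsum (deriv_coeffs c) t"
proof -
  have "(expsum c has_vector_derivative (\<Sum>j\<in>{1..n}. c j * (lam j * exp (lam j * of_real t)))) (at t)"
    unfolding expsum_def[abs_def]
    by (intro has_vector_derivative_sum has_vector_derivative_mult_right has_vector_derivative_exp_mult)
  then show ?thesis
    unfolding expsum_def deriv_coeffs_def by (subst vector_derivative_at) (simp_all add: mult_ac)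
qed

lemma wnorm_expsum: "wnorm (expsum c) = sqrt (sqnorm c)"
  unfolding wnorm_def set_integral_expsum_sq ..

lemma wnorm_deriv_expsum_le:
  assumes "0 \<le> M" "\<And>j. j \<in> {1..n} \<Longrightarrow> cmod (lam j) \<le> M"
  shows "wnorm (\<lambda>t. vector_derivative (expsum c) (at t)) \<le> (M + sqrt (cross_sum n)) * wnorm (expsum c)"
proof -
  have "(\<lambda>t. vector_derivative (expsum c) (at t)) = expsum (deriv_coeffs c)"
    by (simp add: vector_derivative_expsum fun_eq_iff)
  then have "wnorm (\<lambda>t. vector_derivative (expsum c) (at t)) = sqrt (sqnorm (deriv_coeffs c))"
    by (simp add: wnorm_expsum)
  also have "\<dots> \<le> sqrt ((M + sqrt (cross_sum n))\<^sup>2 * sqnorm c)"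
    using sqnorm_deriv_coeffs_le[OF assms] by (simp add: real_sqrt_le_mono)
  also have "\<dots> = (M + sqrt (cross_sum n)) * wnorm (expsum c)"
    using assms(1) cross_sum_nonneg[of n] by (simp add: real_sqrt_mult wnorm_expsum)
  finally show ?thesis .
qed

end

theorem theorem10p1:
  fixes n :: nat and a lam :: "nat \<Rightarrow> complex" and f :: "real \<Rightarrow> complex"
  assumes "n \<ge> 1"
    and "\<And>j. j \<in> {1..n} \<Longrightarrow> Re (lam j) < 1/2"
    and "f = (\<lambda>t. \<Sum>j=1..n. a j * exp (lam j * of_real t))"
  shows "wnorm (\<lambda>t. vector_derivative f (at t))
    \<le> ((MAX j\<in>{1..n}. cmod (lam j))
        + sqrt (\<Sum>j=1..n. (1 - 2 * Re (lam j)) * (\<Sum>k=j+1..n. (1 - 2 * Re (lam k)))))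
      * wnorm f"
proof -
  interpret exp_sum n lam using assms(2) by unfold_locales
  define M where "M = (MAX j\<in>{1..n}. cmod (lam j))"
  have M_ge: "cmod (lam j) \<le> M" if "j \<in> {1..n}" for j
    unfolding M_def using that by (intro Max_ge) auto
  have "0 \<le> M" using M_ge[of 1] assms(1) by (meson atLeastAtMost_iff le_refl norm_ge_zero order_trans)
  moreover have "f = expsum a" unfolding assms(3) expsum_def by (rule ext) simp
  ultimately show ?thesis
    using wnorm_deriv_expsum_le[OF _ M_ge] by (simp add: M_def cross_sum_def weight_def)
qed

end
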